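(* Consider the WKD-IBE construction and signature algorithm described in the context, with fixed public parameters $\mathsf{Params}=(g,g_1,g_2,g_3,h_1,\dots,h_\ell,h_s)$ and master secret $\alpha$. For any pattern $S$, any two well-formed keys $k_1,k_2$ for the pattern $S$, and any message $m\in\mathbb{Z}_p^*$, the distribution of $\mathbf{Sign}(k_1,m)$ is equal to the distribution of $\mathbf{Sign}(k_2,m)$ (over the internal randomness of $\mathbf{Sign}$); that is, the two signature distributions are information-theoretically indistinguishable.
   Context: Patterns: for a prime $p$ and integer $\ell$, a pattern is $S\in(\mathbb{Z}_p^*\cup\{\bot\})^\ell$; $\mathrm{fixed}(S)=\{(i,S(i)):S(i)\neq\bot\}$, $\mathrm{free}(S)=\{i:S(i)=\bot\}$; $P$ matches $S$ if for all $i$, $P(i)=\bot$ or $P(i)=S(i)$. (In JEDI a (URI, time) pair is encoded as such a pattern.) Construction. Let $\mathbb{G}_1,\mathbb{G}_2,\mathbb{G}_T$ be cyclic groups of prime order $p$ with a bilinear map $e:\mathbb{G}_1\times\mathbb{G}_2\to\mathbb{G}_T$. $\mathbf{Setup}(1^\ell)$: choose $g\in\mathbb{G}_2$ and $g_2,g_3,h_1,\dots,h_\ell,h_s\in\mathbb{G}_1$ uniformly, $\alpha\in\mathbb{Z}_p$ uniformly, set $g_1=g^\alpha$; $\mathsf{Params}=(g,g_1,g_2,g_3,h_1,\dots,h_\ell,h_s)$ and $\mathsf{MasterKey}=g_2^\alpha$. Here $s$ is a special index, distinct from $1,\dots,\ell$, never fixed in a pattern. For a pattern $S$ write $Q_S=g_3\prod_{(i,a_i)\in\mathrm{fixed}(S)}h_i^{a_i}$.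 Keys are triples $(k_0,k_1,B)$ with $k_0\in\mathbb{G}_1$, $k_1\in\mathbb{G}_2$, and $B$ a set of pairs $(j,b_j)$, $b_j\in\mathbb{G}_1$. $\mathbf{KeyDer}$ from the master key to pattern $S$: sample $r\in\mathbb{Z}_p$ and output $(g_2^\alpha Q_S^r,\ g^r,\ \{(j,h_j^r)\}_{j\in\mathrm{free}(S)\cup\{s\}})$. $\mathbf{KeyDer}$ from a key $(k_0,k_1,B)$, $B=\{(i,b_i)\}$, to pattern $S$: sample $t\in\mathbb{Z}_p$ and output $\big(k_0\,Q_S^t\prod_{(i,a_i)\in\mathrm{fixed}(S),\,(i,b_i)\in B}b_i^{a_i},\ g^t k_1,\ \{(j,h_j^t b_j)\}_{j\in\mathrm{free}(S)\cup\{s\}}\big)$. A key for pattern $S$ is well-formed if it equals $(g_2^\alpha Q_S^{r_0},\ g^{r_0},\ \{(j,h_j^{r_0})\}_{j\in\mathrm{free}(S)\cup\{s\}})$ for some $r_0\in\mathbb{Z}_p$. Signing. $\mathbf{Sign}(K,m)$ for a key $K=(k_0,k_1,B)$ for pattern $S$ with $(s,b_s)\in B$ and $m\in\mathbb{Z}_p^*$: sample $t\in\mathbb{Z}_p$ and output $\big(k_0\,(Q_S\,h_s^m)^t\,b_s^m,\ g^t k_1\big)$. *)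

theory Defs
  imports "HOL-Probability.Probability_Mass_Function" "HOL-Algebra.FiniteProduct" "HOL-Algebra.Generated_Groups"
begin

(* Patterns of length l: lists of length l; entry Some a is a fixed component (a in Z_p^* ),
   None is the free symbol (bottom). Components are indexed 0..l-1. *)
type_synonym pattern = "nat option list"

(* key indices: position i (0-based) or the special signing index s *)
datatype idx = Pos nat | Spec

definition valid_pattern :: "nat \<Rightarrow> nat \<Rightarrow> pattern \<Rightarrow> bool" where
  "valid_pattern p l S \<longleftrightarrow> length S = l \<and> (\<forall>i<length S. \<forall>a. S ! i = Some a \<longrightarrow> a \<in> {1..<p})"

definition fixed_idx :: "pattern \<Rightarrow> nat set" where
  "fixed_idx S = {i. i < length S \<and> S ! i \<noteq> None}"

definition free_idx :: "pattern \<Rightarrow> nat set" where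
  "free_idx S = {i. i < length S \<and> S ! i = None}"

definition Q_pat :: "('a, 'm) monoid_scheme \<Rightarrow> 'a \<Rightarrow> (nat \<Rightarrow> 'a) \<Rightarrow> pattern \<Rightarrow> 'a" where
  "Q_pat G1 g3 h S = g3 \<otimes>\<^bsub>G1\<^esub> (\<Otimes>\<^bsub>G1\<^esub> i\<in>fixed_idx S. h i [^]\<^bsub>G1\<^esub> the (S ! i))"

type_synonym ('a, 'b) key = "'a \<times> 'b \<times> (idx \<Rightarrow> 'a option)"

definition wf_key_r :: "('a, 'm) monoid_scheme \<Rightarrow> ('b, 'n) monoid_scheme \<Rightarrow> 'b \<Rightarrow> 'a \<Rightarrow> nat
    \<Rightarrow> 'a \<Rightarrow> (nat \<Rightarrow> 'a) \<Rightarrow> 'a \<Rightarrow> pattern \<Rightarrow> nat \<Rightarrow> ('a, 'b) key" where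
  "wf_key_r G1 G2 g g2 \<alpha> g3 h hs S r0 =
     (g2 [^]\<^bsub>G1\<^esub> \<alpha> \<otimes>\<^bsub>G1\<^esub> Q_pat G1 g3 h S [^]\<^bsub>G1\<^esub> r0,
      g [^]\<^bsub>G2\<^esub> r0,
      (\<lambda>j. case j of Pos i \<Rightarrow> (if i \<in> free_idx S then Some (h i [^]\<^bsub>G1\<^esub> r0) else None)
                 | Spec \<Rightarrow> Some (hs [^]\<^bsub>G1\<^esub> r0)))"

definition well_formed_key :: "('a, 'm) monoid_scheme \<Rightarrow> ('b, 'n) monoid_scheme \<Rightarrow> nat \<Rightarrow> 'b \<Rightarrow> 'a \<Rightarrow> nat
    \<Rightarrow> 'a \<Rightarrow> (nat \<Rightarrow> 'a) \<Rightarrow> 'a \<Rightarrow> pattern \<Rightarrow> ('a, 'b) key \<Rightarrow> bool" where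
  "well_formed_key G1 G2 p g g2 \<alpha> g3 h hs S K \<longleftrightarrow> (\<exists>r0 \<in> {..<p}. K = wf_key_r G1 G2 g g2 \<alpha> g3 h hs S r0)"

definition sign_dist :: "('a, 'm) monoid_scheme \<Rightarrow> ('b, 'n) monoid_scheme \<Rightarrow> nat \<Rightarrow> 'b
    \<Rightarrow> 'a \<Rightarrow> (nat \<Rightarrow> 'a) \<Rightarrow> 'a \<Rightarrow> pattern \<Rightarrow> ('a, 'b) key \<Rightarrow> nat \<Rightarrow> ('a \<times> 'b) pmf" where
  "sign_dist G1 G2 p g g3 h hs S K m =
     (case K of (k0, k1, B) \<Rightarrow>
        map_pmf (\<lambda>t. (k0 \<otimes>\<^bsub>G1\<^esub> (Q_pat G1 g3 h S \<otimes>\<^bsub>G1\<^esub> hs [^]\<^bsub>G1\<^esub> m) [^]\<^bsub>G1\<^esub> t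
                        \<otimes>\<^bsub>G1\<^esub> the (B Spec) [^]\<^bsub>G1\<^esub> m,
                     g [^]\<^bsub>G2\<^esub> t \<otimes>\<^bsub>G2\<^esub> k1))
                (pmf_of_set {..<p}))"

definition prime_cyclic_group :: "('a, 'm) monoid_scheme \<Rightarrow> nat \<Rightarrow> bool" where
  "prime_cyclic_group G p \<longleftrightarrow> comm_group G \<and> finite (carrier G) \<and> card (carrier G) = p
     \<and> (\<exists>x\<in>carrier G. generate G {x} = carrier G)"

definition bilinear_map :: "('a, 'm) monoid_scheme \<Rightarrow> ('b, 'n) monoid_scheme \<Rightarrow> ('c, 'o) monoid_scheme
    \<Rightarrow> ('a \<Rightarrow> 'b \<Rightarrow> 'c) \<Rightarrow> bool" where
  "bilinear_map G1 G2 Gt e \<longleftrightarrow>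
     (\<forall>x\<in>carrier G1. \<forall>y\<in>carrier G2. e x y \<in> carrier Gt) \<and>
     (\<forall>x\<in>carrier G1. \<forall>x'\<in>carrier G1. \<forall>y\<in>carrier G2. e (x \<otimes>\<^bsub>G1\<^esub> x') y = e x y \<otimes>\<^bsub>Gt\<^esub> e x' y) \<and>
     (\<forall>x\<in>carrier G1. \<forall>y\<in>carrier G2. \<forall>y'\<in>carrier G2. e x (y \<otimes>\<^bsub>G2\<^esub> y') = e x y \<otimes>\<^bsub>Gt\<^esub> e x y')"

end

theory Submission
  imports Defs "HOL-Algebra.Multiplicative_Group" "HOL-Number_Theory.Cong"
begin

text \<open>A signature made with the well-formed key of randomness r and signing randomness t is
  exactly the signature made with the key of randomness 0 and signing randomness r + t: the
  key's randomness is absorbed into the exponent of Q_S h_s^m in the first component and of g in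
  the second. Since exponents only matter modulo p and t is uniform on Z_p, so is r + t mod p,
  hence the signature distribution does not depend on r.\<close>

lemma bij_betw_add_mod_lessThan:
  assumes "0 < (p::nat)"
  shows "bij_betw (\<lambda>t. (r + t) mod p) {..<p} {..<p}"
proof -
  have inj: "inj_on (\<lambda>t. (r + t) mod p) {..<p}"
  proof (rule inj_onI)
    fix a b assume "a \<in> {..<p}" "b \<in> {..<p}" "(r + a) mod p = (r + b) mod p"
    then show "a = b" by (simp add: cong_def[symmetric] cong_add_lcancel_nat) (simp add: cong_def)
  qed
  then have "(\<lambda>t. (r + t) mod p) ` {..<p} = {..<p}"
    using assms by (intro endo_inj_surj) auto
  with inj show ?thesis by (simp add: bij_betw_def)
qed

lemma map_pmf_add_mod_pmf_of_set_lessThan: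
  assumes "0 < (p::nat)"
  shows "map_pmf (\<lambda>t. (r + t) mod p) (pmf_of_set {..<p}) = pmf_of_set {..<p}"
  using assms by (intro map_pmf_of_set_bij_betw bij_betw_add_mod_lessThan) auto

lemma (in group) nat_pow_mod_order:
  fixes n :: nat
  assumes "x \<in> carrier G"
  shows "x [^] (n mod order G) = x [^] n"
proof -
  have "x [^] n = (x [^] order G) [^] (n div order G) \<otimes> x [^] (n mod order G)"
    using assms by (simp add: nat_pow_pow nat_pow_mult)
  then show ?thesis
    using assms by (simp add: pow_order_eq_1)
qed

lemma (in comm_group) nat_pow_rerandomize:
  fixes r m t :: nat
  assumes "q \<in> carrier G" "s \<in> carrier G"
  shows "q [^] r \<otimes> (q \<otimes> s [^] m) [^] t \<otimes> (s [^] r) [^] m = (q \<otimes> s [^] m) [^] (r + t)"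
proof -
  have "(q \<otimes> s [^] m) [^] r = q [^] r \<otimes> (s [^] r) [^] m"
    using assms by (simp add: pow_mult_distrib[OF m_comm] nat_pow_pow mult.commute)
  then show ?thesis
    using assms by (simp add: nat_pow_mult[symmetric] m_ac)
qed

lemma (in comm_monoid) Q_pat_closed:
  assumes "g3 \<in> carrier G" "\<forall>i\<in>fixed_idx S. h i \<in> carrier G"
  shows "Q_pat G g3 h S \<in> carrier G"
  using assms unfolding Q_pat_def by (intro m_closed finprod_closed) auto

lemma sign_dist_wf_key_r:
  assumes "comm_group G1" "group G2" "order G1 = p" "order G2 = p" "0 < p"
    and "g \<in> carrier G2" "g2 \<in> carrier G1" "hs \<in> carrier G1"
    and "Q_pat G1 g3 h S \<in> carrier G1"
  shows "sign_dist G1 G2 p g g3 h hs S (wf_key_r G1 G2 g g2 \<alpha> g3 h hs S r) m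
    = map_pmf (\<lambda>u. (g2 [^]\<^bsub>G1\<^esub> \<alpha> \<otimes>\<^bsub>G1\<^esub> (Q_pat G1 g3 h S \<otimes>\<^bsub>G1\<^esub> hs [^]\<^bsub>G1\<^esub> m) [^]\<^bsub>G1\<^esub> u,
                    g [^]\<^bsub>G2\<^esub> u))
        (pmf_of_set {..<p})"
    (is "_ = map_pmf ?fresh _")
proof -
  interpret G1: comm_group G1 by fact
  interpret G2: group G2 by fact
  let ?Q = "Q_pat G1 g3 h S"
  have "sign_dist G1 G2 p g g3 h hs S (wf_key_r G1 G2 g g2 \<alpha> g3 h hs S r) m
      = map_pmf (\<lambda>t. ?fresh ((r + t) mod p)) (pmf_of_set {..<p})"
  proof -
    have "g2 [^]\<^bsub>G1\<^esub> \<alpha> \<otimes>\<^bsub>G1\<^esub> ?Q [^]\<^bsub>G1\<^esub> r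
          \<otimes>\<^bsub>G1\<^esub> (?Q \<otimes>\<^bsub>G1\<^esub> hs [^]\<^bsub>G1\<^esub> m) [^]\<^bsub>G1\<^esub> t
          \<otimes>\<^bsub>G1\<^esub> (hs [^]\<^bsub>G1\<^esub> r) [^]\<^bsub>G1\<^esub> m
        = g2 [^]\<^bsub>G1\<^esub> \<alpha> \<otimes>\<^bsub>G1\<^esub> (?Q \<otimes>\<^bsub>G1\<^esub> hs [^]\<^bsub>G1\<^esub> m) [^]\<^bsub>G1\<^esub> ((r + t) mod p)"
      for t
      using assms G1.nat_pow_rerandomize[of ?Q hs r m t] G1.nat_pow_mod_order[of _ "r + t"]
      by (simp add: G1.m_assoc)
    moreover have "g [^]\<^bsub>G2\<^esub> t \<otimes>\<^bsub>G2\<^esub> g [^]\<^bsub>G2\<^esub> r = g [^]\<^bsub>G2\<^esub> ((r + t) mod p)" for t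
      using assms G2.nat_pow_mod_order[of g "r + t"] by (simp add: G2.nat_pow_mult add.commute)
    ultimately show ?thesis
      by (simp add: sign_dist_def wf_key_r_def)
  qed
  also have "\<dots> = map_pmf ?fresh (map_pmf (\<lambda>t. (r + t) mod p) (pmf_of_set {..<p}))"
    by (simp add: pmf.map_comp o_def)
  also have "\<dots> = map_pmf ?fresh (pmf_of_set {..<p})"
    using assms(5) by (simp add: map_pmf_add_mod_pmf_of_set_lessThan)
  finally show ?thesis .
qed

theorem theorem2:
  fixes G1 :: "('a, 'm) monoid_scheme" and G2 :: "('b, 'n) monoid_scheme"
    and Gt :: "('c, 'o) monoid_scheme" and e :: "'a \<Rightarrow> 'b \<Rightarrow> 'c"
    and p l :: nat and g g1 :: 'b and g2 g3 hs :: 'a and h :: "nat \<Rightarrow> 'a" and \<alpha> :: nat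
    and S :: pattern and K1 K2 :: "('a, 'b) key" and m :: nat
  assumes "prime p"
    and "prime_cyclic_group G1 p" and "prime_cyclic_group G2 p" and "prime_cyclic_group Gt p"
    and "bilinear_map G1 G2 Gt e"
    and "g \<in> carrier G2" and "g2 \<in> carrier G1" and "g3 \<in> carrier G1" and "hs \<in> carrier G1"
    and "\<forall>i<l. h i \<in> carrier G1"
    and "\<alpha> < p" and "g1 = g [^]\<^bsub>G2\<^esub> \<alpha>"
    and "valid_pattern p l S"
    and "well_formed_key G1 G2 p g g2 \<alpha> g3 h hs S K1"
    and "well_formed_key G1 G2 p g g2 \<alpha> g3 h hs S K2"
    and "m \<in> {1..<p}"
  shows "sign_dist G1 G2 p g g3 h hs S K1 m = sign_dist G1 G2 p g g3 h hs S K2 m"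
proof -
  have G1: "comm_group G1" "order G1 = p" and G2: "comm_group G2" "order G2 = p"
    using assms(2,3) by (auto simp: prime_cyclic_group_def order_def)
  have "Q_pat G1 g3 h S \<in> carrier G1"
    using assms(8,10,13) comm_group.axioms(1)[OF G1(1)]
    by (intro comm_monoid.Q_pat_closed) (auto simp: fixed_idx_def valid_pattern_def)
  then have sign_wf: "sign_dist G1 G2 p g g3 h hs S (wf_key_r G1 G2 g g2 \<alpha> g3 h hs S r) m
      = sign_dist G1 G2 p g g3 h hs S (wf_key_r G1 G2 g g2 \<alpha> g3 h hs S 0) m" for r
    using G1 G2 assms(1,6,7,9) comm_group.axioms(2)[OF G2(1)] prime_gt_0_nat
    by (simp only: sign_dist_wf_key_r)
  from assms(14,15) obtain r1 r2 where
    "K1 = wf_key_r G1 G2 g g2 \<alpha> g3 h hs S r1" "K2 = wf_key_r G1 G2 g g2 \<alpha> g3 h hs S r2"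
    by (auto simp: well_formed_key_def)
  then show ?thesis using sign_wf[of r1] sign_wf[of r2] by simp
qed

end
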